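(* In the $\beta$-model with true parameter satisfying $\beta_1=\cdots=\beta_r$, let $r$ be a fixed positive integer. (a) If $b_n^3/c_n^2=o\big(n^{3/2}/(\log n)^{1/2}\big)$, then $(\sum_{i=1}^r\bar d_i)\,\tilde w_{11}\,(\sum_{i=1}^r\bar d_i)=o_p(1)$. (b) If $b_n^3/c_n^3=o(n^{1/2})$, then $(\sum_{i=1}^r\bar d_i)\,\tilde{\mathbf w}_{12}^\top\bar{\mathbf d}_2=o_p(1)$. (c) If $b_n^3/c_n^3=o(n^{3/4})$, then $\bar{\mathbf d}_2^\top(W_{22}-\widetilde W_{22})\bar{\mathbf d}_2=o_p(1)$.
   Context: $\beta$-model: $a_{ij}=a_{ji}\in\{0,1\}$, $1\le i<j\le n$, independent with $P(a_{ij}=1)=e^{\beta_i+\beta_j}/(1+e^{\beta_i+\beta_j})$, $a_{ii}=0$; $d_i=\sum_{j\ne i}a_{ij}$, $\bar d_i=d_i-\mathbb Ed_i$, $\bar{\mathbf d}_2=(\bar d_{r+1},\dots,\bar d_n)^\top$. $V=(v_{ij})$ with $v_{ij}=e^{\beta_i+\beta_j}/(1+e^{\beta_i+\beta_j})^2$ ($i\ne j$), $v_{ii}=\sum_{j\ne i}v_{ij}$; $S=\mathrm{diag}(1/v_{11},\dots,1/v_{nn})$; $W_{22}$ is the bottom-right $(n-r)\times(n-r)$ block of $V^{-1}-S$. $\widetilde{\mathbf d}=(\sum_{i=1}^rd_i,d_{r+1},\dots,d_n)^\top$, $\widetilde V=(\tilde v_{ij})$ its covariance matrix, $\widetilde S=\mathrm{diag}(1/\tilde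 v_{11},1/v_{r+1,r+1},\dots,1/v_{nn})$, and $\widetilde W=\widetilde V^{-1}-\widetilde S$ is partitioned as $\begin{pmatrix}\tilde w_{11}&\tilde{\mathbf w}_{12}^\top\\\tilde{\mathbf w}_{12}&\widetilde W_{22}\end{pmatrix}$ with $\tilde w_{11}$ a scalar and $\widetilde W_{22}$ of size $(n-r)\times(n-r)$. $b_n=\max_{i\neq j}(1+e^{\beta_i+\beta_j})^2/e^{\beta_i+\beta_j}$, $c_n=\min_{i\ne j}(\cdot)$. Asymptotics as $n\to\infty$. *)

theory Defs
  imports "HOL-Probability.Probability" "Jordan_Normal_Form.Matrix"
begin

text \<open>Beta-model on vertices 0..n-1 (the paper's 1..n shifted by one).
  A graph is encoded by the indicator of the upper-triangular pairs (i,j), i<j<n.\<close>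

definition pairs :: "nat \<Rightarrow> (nat \<times> nat) set" where
  "pairs n = {(i,j). i < j \<and> j < n}"

definition logistic :: "real \<Rightarrow> real" where
  "logistic x = exp x / (1 + exp x)"

definition beta_pmf :: "nat \<Rightarrow> (nat \<Rightarrow> real) \<Rightarrow> (nat \<times> nat \<Rightarrow> bool) pmf" where
  "beta_pmf n \<beta> = Pi_pmf (pairs n) False (\<lambda>(i,j). bernoulli_pmf (logistic (\<beta> i + \<beta> j)))"

definition adj :: "(nat \<times> nat \<Rightarrow> bool) \<Rightarrow> nat \<Rightarrow> nat \<Rightarrow> real" where
  "adj a i j = (if i < j then (if a (i,j) then 1 else 0)
               else if j < i then (if a (j,i) then 1 else 0) else 0)"

definition deg :: "nat \<Rightarrow> (nat \<times> nat \<Rightarrow> bool) \<Rightarrow> nat \<Rightarrow> real" where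
  "deg n a i = (\<Sum>j\<in>{..<n} - {i}. adj a i j)"

definition dbar :: "nat \<Rightarrow> (nat \<Rightarrow> real) \<Rightarrow> nat \<Rightarrow> (nat \<times> nat \<Rightarrow> bool) \<Rightarrow> real" where
  "dbar n \<beta> i a = deg n a i - measure_pmf.expectation (beta_pmf n \<beta>) (\<lambda>a. deg n a i)"

definition vv :: "(nat \<Rightarrow> real) \<Rightarrow> nat \<Rightarrow> nat \<Rightarrow> real" where
  "vv \<beta> i j = exp (\<beta> i + \<beta> j) / (1 + exp (\<beta> i + \<beta> j))^2"

definition Vmat :: "nat \<Rightarrow> (nat \<Rightarrow> real) \<Rightarrow> real mat" where
  "Vmat n \<beta> = mat n n (\<lambda>(i,j). if i = j then (\<Sum>k\<in>{..<n} - {i}. vv \<beta> i k) else vv \<beta> i j)"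

definition Smat :: "nat \<Rightarrow> (nat \<Rightarrow> real) \<Rightarrow> real mat" where
  "Smat n \<beta> = mat n n (\<lambda>(i,j). if i = j then 1 / (Vmat n \<beta> $$ (i,i)) else 0)"

text \<open>Matrix inverse (the matrices considered are invertible).\<close>
definition mat_inv :: "real mat \<Rightarrow> real mat" where
  "mat_inv A = (SOME B. inverts_mat A B \<and> inverts_mat B A)"

definition Wmat :: "nat \<Rightarrow> (nat \<Rightarrow> real) \<Rightarrow> real mat" where
  "Wmat n \<beta> = mat_inv (Vmat n \<beta>) - Smat n \<beta>"

definition W22 :: "nat \<Rightarrow> nat \<Rightarrow> (nat \<Rightarrow> real) \<Rightarrow> real mat" where
  "W22 n r \<beta> = mat (n - r) (n - r) (\<lambda>(i,j). Wmat n \<beta> $$ (r + i, r + j))"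

definition dtil :: "nat \<Rightarrow> nat \<Rightarrow> (nat \<times> nat \<Rightarrow> bool) \<Rightarrow> nat \<Rightarrow> real" where
  "dtil n r a k = (if k = 0 then (\<Sum>i<r. deg n a i) else deg n a (r + k - 1))"

definition Vtil :: "nat \<Rightarrow> nat \<Rightarrow> (nat \<Rightarrow> real) \<Rightarrow> real mat" where
  "Vtil n r \<beta> = mat (n - r + 1) (n - r + 1) (\<lambda>(k,l).
     measure_pmf.expectation (beta_pmf n \<beta>)
       (\<lambda>a. (dtil n r a k - measure_pmf.expectation (beta_pmf n \<beta>) (\<lambda>b. dtil n r b k)) *
            (dtil n r a l - measure_pmf.expectation (beta_pmf n \<beta>) (\<lambda>b. dtil n r b l))))"

definition Stil :: "nat \<Rightarrow> nat \<Rightarrow> (nat \<Rightarrow> real) \<Rightarrow> real mat" where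
  "Stil n r \<beta> = mat (n - r + 1) (n - r + 1) (\<lambda>(k,l).
     if k = l then (if k = 0 then 1 / (Vtil n r \<beta> $$ (0,0))
                    else 1 / (Vmat n \<beta> $$ (r + k - 1, r + k - 1)))
     else 0)"

definition Wtil :: "nat \<Rightarrow> nat \<Rightarrow> (nat \<Rightarrow> real) \<Rightarrow> real mat" where
  "Wtil n r \<beta> = mat_inv (Vtil n r \<beta>) - Stil n r \<beta>"

definition wtil11 :: "nat \<Rightarrow> nat \<Rightarrow> (nat \<Rightarrow> real) \<Rightarrow> real" where
  "wtil11 n r \<beta> = Wtil n r \<beta> $$ (0,0)"

definition wtil12 :: "nat \<Rightarrow> nat \<Rightarrow> (nat \<Rightarrow> real) \<Rightarrow> nat \<Rightarrow> real" where
  "wtil12 n r \<beta> j = Wtil n r \<beta> $$ (j + 1, 0)"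

definition Wtil22 :: "nat \<Rightarrow> nat \<Rightarrow> (nat \<Rightarrow> real) \<Rightarrow> real mat" where
  "Wtil22 n r \<beta> = mat (n - r) (n - r) (\<lambda>(i,j). Wtil n r \<beta> $$ (i + 1, j + 1))"

definition bn :: "nat \<Rightarrow> (nat \<Rightarrow> real) \<Rightarrow> real" where
  "bn n \<beta> = Max {(1 + exp (\<beta> i + \<beta> j))^2 / exp (\<beta> i + \<beta> j) | i j. i < n \<and> j < n \<and> i \<noteq> j}"

definition cn :: "nat \<Rightarrow> (nat \<Rightarrow> real) \<Rightarrow> real" where
  "cn n \<beta> = Min {(1 + exp (\<beta> i + \<beta> j))^2 / exp (\<beta> i + \<beta> j) | i j. i < n \<and> j < n \<and> i \<noteq> j}"

definition op1 :: "(nat \<Rightarrow> 'a pmf) \<Rightarrow> (nat \<Rightarrow> 'a \<Rightarrow> real) \<Rightarrow> bool" where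
  "op1 P X \<longleftrightarrow> (\<forall>\<epsilon>>0. ((\<lambda>n. measure_pmf.prob (P n) {a. \<bar>X n a\<bar> > \<epsilon>}) \<longlongrightarrow> 0) sequentially)"

end

theory Submission
  imports Defs "Jordan_Normal_Form.Determinant" "HOL-Real_Asymp.Real_Asymp"
begin

(* Every centred degree is a sum of independent centred edge indicators, so the covariance of two
   linear statistics sum_i x_i dbar_i and sum_i y_i dbar_i is the pair form
   sum_{i<j} (x_i + x_j) (y_i + y_j) v_ij.  V is the Gram matrix of this form, and Vtil is its Gram
   matrix on lifted weight vectors, i.e. those constant on the first r vertices.
   Let g be the first column of Vtil^-1 and sigma = Vtil_00, so that w11 = g_0 - 1/sigma.  On lifted
   vectors the form is at least (1 - eps) sigma u_0^2 with eps = r b_n / (c_n (n - r - 2)): the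
   first r vertices are tied to the others by weights of order r / c_n, while the remaining block
   has diagonal weight of order n / b_n.  Together with Cauchy-Schwarz this squeezes g_0 sigma
   into [1, 1 / (1 - eps)], which bounds the statistics of (a) and (b) in L^1 by 2 eps and
   2 sqrt eps; Markov's inequality then gives o_p(1), because each growth hypothesis forces
   b_n / c_n <= sqrt n and hence eps -> 0.
   In (c) the two blocks coincide exactly. *)

section \<open>Centred degrees as sums of independent edge variables\<close>

abbreviation expect :: "nat \<Rightarrow> (nat \<Rightarrow> real) \<Rightarrow> ((nat \<times> nat \<Rightarrow> bool) \<Rightarrow> real) \<Rightarrow> real" where
  "expect n \<beta> f \<equiv> measure_pmf.expectation (beta_pmf n \<beta>) f"

lemma finite_pairs [simp]: "finite (pairs n)"
proof -
  have "pairs n \<subseteq> {..<n} \<times> {..<n}" by (auto simp: pairs_def)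
  then show ?thesis by (rule finite_subset) auto
qed

lemma finite_set_pmf_beta_pmf: "finite (set_pmf (beta_pmf n \<beta>))"
proof -
  let ?B = "PiE_dflt (pairs n) False
              (set_pmf \<circ> (\<lambda>(i, j). bernoulli_pmf (logistic (\<beta> i + \<beta> j))))"
  have "set_pmf (beta_pmf n \<beta>) \<subseteq> ?B"
    unfolding beta_pmf_def by (rule set_Pi_pmf_subset') simp
  moreover have "finite ?B" by (intro finite_PiE_dflt) auto
  ultimately show ?thesis by (rule finite_subset)
qed

lemma integrable_beta_pmf [simp]: "integrable (measure_pmf (beta_pmf n \<beta>)) (f :: _ \<Rightarrow> real)"
  by (rule integrable_measure_pmf_finite[OF finite_set_pmf_beta_pmf])

lemma logistic_bounds: "0 \<le> logistic x" "logistic x \<le> 1"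
  unfolding logistic_def by (auto simp: add_pos_nonneg)

lemma vv_eq_logistic: "vv \<beta> i j = logistic (\<beta> i + \<beta> j) * (1 - logistic (\<beta> i + \<beta> j))"
proof -
  have "1 + exp (\<beta> i + \<beta> j) > 0" by (simp add: add_pos_pos)
  then show ?thesis unfolding vv_def logistic_def by (simp add: field_simps power2_eq_square)
qed

lemma vv_pos: "0 < vv \<beta> i j"
proof -
  have "0 < 1 + exp (\<beta> i + \<beta> j)" by (simp add: add_pos_pos)
  then show ?thesis unfolding vv_def by simp
qed

lemma vv_commute: "vv \<beta> i j = vv \<beta> j i"
  unfolding vv_def by (simp add: add.commute)

lemma expectation_edge:
  assumes "(i, j) \<in> pairs n"
  shows "expect n \<beta> (\<lambda>a. of_bool (a (i, j))) = logistic (\<beta> i + \<beta> j)"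
proof -
  have "map_pmf (\<lambda>a. a (i, j)) (beta_pmf n \<beta>) = bernoulli_pmf (logistic (\<beta> i + \<beta> j))"
    unfolding beta_pmf_def using assms by (subst Pi_pmf_component) auto
  moreover have "expect n \<beta> (\<lambda>a. of_bool (a (i, j)))
      = measure_pmf.expectation (map_pmf (\<lambda>a. a (i, j)) (beta_pmf n \<beta>)) of_bool"
    by simp
  ultimately show ?thesis using logistic_bounds by simp
qed

lemma expectation_edge_pair:
  assumes "e \<in> pairs n" "f \<in> pairs n" "e \<noteq> f"
  shows "expect n \<beta> (\<lambda>a. of_bool (a e) * of_bool (a f))
       = logistic (\<beta> (fst e) + \<beta> (snd e)) * logistic (\<beta> (fst f) + \<beta> (snd f))"
proof -
  define h where "h x b = (if x = e \<or> x = f then of_bool b else (1::real))" for x b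
  let ?edge = "\<lambda>(i, j). bernoulli_pmf (logistic (\<beta> i + \<beta> j))"
  have prod: "of_bool (a e) * of_bool (a f) = (\<Prod>x\<in>pairs n. h x (a x))" for a
  proof -
    have "(\<Prod>x\<in>pairs n. h x (a x)) = (\<Prod>x\<in>{e, f}. h x (a x))"
      by (rule prod.mono_neutral_right) (use assms in \<open>auto simp: h_def\<close>)
    then show ?thesis using assms by (simp add: h_def)
  qed
  have "expect n \<beta> (\<lambda>a. of_bool (a e) * of_bool (a f))
      = (\<Prod>x\<in>pairs n. measure_pmf.expectation (?edge x) (h x))"
    unfolding prod beta_pmf_def
    by (rule expectation_prod_Pi_pmf) (auto simp: h_def integrable_measure_pmf_finite)
  also have "\<dots> = (\<Prod>x\<in>{e, f}. measure_pmf.expectation (?edge x) (h x))"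
    by (rule prod.mono_neutral_left[symmetric])
       (use assms logistic_bounds in \<open>auto simp: h_def case_prod_unfold\<close>)
  also have "\<dots> = logistic (\<beta> (fst e) + \<beta> (snd e)) * logistic (\<beta> (fst f) + \<beta> (snd f))"
    using assms logistic_bounds by (simp add: h_def case_prod_unfold)
  finally show ?thesis .
qed

definition edge_noise :: "(nat \<Rightarrow> real) \<Rightarrow> (nat \<times> nat \<Rightarrow> bool) \<Rightarrow> nat \<Rightarrow> nat \<Rightarrow> real" where
  "edge_noise \<beta> a i j = adj a i j - logistic (\<beta> i + \<beta> j)"

lemma edge_noise_commute: "edge_noise \<beta> a i j = edge_noise \<beta> a j i"
  by (auto simp: edge_noise_def adj_def add.commute)

lemma adj_pair: "(i, j) \<in> pairs n \<Longrightarrow> adj a i j = of_bool (a (i, j))"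
  by (simp add: adj_def pairs_def)

lemma expectation_edge_noise_mult:
  assumes "e \<in> pairs n" "f \<in> pairs n"
  shows "expect n \<beta> (\<lambda>a. edge_noise \<beta> a (fst e) (snd e) * edge_noise \<beta> a (fst f) (snd f))
       = (if e = f then vv \<beta> (fst e) (snd e) else 0)"
proof -
  let ?p = "logistic (\<beta> (fst e) + \<beta> (snd e))" and ?q = "logistic (\<beta> (fst f) + \<beta> (snd f))"
  have noise: "edge_noise \<beta> a (fst x) (snd x) = of_bool (a x) - logistic (\<beta> (fst x) + \<beta> (snd x))"
    if "x \<in> pairs n" for x a
    using that adj_pair[of "fst x" "snd x" n a] by (simp add: edge_noise_def)
  have E: "expect n \<beta> (\<lambda>a. of_bool (a x)) = logistic (\<beta> (fst x) + \<beta> (snd x))" if "x \<in> pairs n" for x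
    using expectation_edge[of "fst x" "snd x" n \<beta>] that by simp
  show ?thesis
  proof (cases "e = f")
    case True
    have sq: "edge_noise \<beta> a (fst e) (snd e) * edge_noise \<beta> a (fst f) (snd f)
        = (1 - 2 * ?p) * of_bool (a e) + ?p * ?p" for a
      unfolding noise[OF assms(1)] noise[OF assms(2)] True by (cases "a f") (simp_all add: algebra_simps)
    show ?thesis using True assms unfolding sq by (simp add: E vv_eq_logistic algebra_simps)
  next
    case False
    have prod: "edge_noise \<beta> a (fst e) (snd e) * edge_noise \<beta> a (fst f) (snd f)
        = of_bool (a e) * of_bool (a f) - ?q * of_bool (a e) - ?p * of_bool (a f) + ?p * ?q" for a
      unfolding noise[OF assms(1)] noise[OF assms(2)] by (simp add: algebra_simps)
    show ?thesis using False assms unfolding prod by (simp add: E expectation_edge_pair)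
  qed
qed

lemma expectation_edge_sum_mult:
  "expect n \<beta> (\<lambda>a. (\<Sum>(i, j)\<in>pairs n. x i j * edge_noise \<beta> a i j) *
                   (\<Sum>(i, j)\<in>pairs n. y i j * edge_noise \<beta> a i j))
   = (\<Sum>(i, j)\<in>pairs n. x i j * y i j * vv \<beta> i j)"
proof -
  let ?X = "\<lambda>e. x (fst e) (snd e)" and ?Y = "\<lambda>e. y (fst e) (snd e)"
  let ?N = "\<lambda>a e. edge_noise \<beta> a (fst e) (snd e)"
  have "expect n \<beta> (\<lambda>a. (\<Sum>(i, j)\<in>pairs n. x i j * edge_noise \<beta> a i j) *
                        (\<Sum>(i, j)\<in>pairs n. y i j * edge_noise \<beta> a i j))
      = expect n \<beta> (\<lambda>a. \<Sum>e\<in>pairs n. \<Sum>f\<in>pairs n. ?X e * ?Y f * (?N a e * ?N a f))"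
    by (simp add: case_prod_unfold sum_product algebra_simps)
  also have "\<dots> = (\<Sum>e\<in>pairs n. \<Sum>f\<in>pairs n. ?X e * ?Y f * expect n \<beta> (\<lambda>a. ?N a e * ?N a f))"
    by simp
  also have "\<dots> = (\<Sum>e\<in>pairs n. \<Sum>f\<in>pairs n. ?X e * ?Y f * (if e = f then vv \<beta> (fst e) (snd e) else 0))"
    by (intro sum.cong refl) (simp add: expectation_edge_noise_mult)
  also have "\<dots> = (\<Sum>(i, j)\<in>pairs n. x i j * y i j * vv \<beta> i j)"
    by (simp add: if_distrib case_prod_unfold cong: if_cong)
  finally show ?thesis .
qed

lemma expectation_adj:
  assumes "i < n" "j < n" "i \<noteq> j"
  shows "expect n \<beta> (\<lambda>a. adj a i j) = logistic (\<beta> i + \<beta> j)"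
proof (cases "i < j")
  case True
  then have "(i, j) \<in> pairs n" using assms by (simp add: pairs_def)
  then show ?thesis by (simp add: adj_pair expectation_edge)
next
  case False
  then have "(j, i) \<in> pairs n" "adj a i j = adj a j i" for a
    using assms by (auto simp: pairs_def adj_def)
  then show ?thesis by (simp add: adj_pair expectation_edge add.commute)
qed

lemma dbar_eq_edge_noise_sum:
  assumes "i < n"
  shows "dbar n \<beta> i a = (\<Sum>j\<in>{..<n}-{i}. edge_noise \<beta> a i j)"
proof -
  have "expect n \<beta> (\<lambda>a. deg n a i) = (\<Sum>j\<in>{..<n}-{i}. expect n \<beta> (\<lambda>a. adj a i j))"
    by (simp add: deg_def)
  also have "\<dots> = (\<Sum>j\<in>{..<n}-{i}. logistic (\<beta> i + \<beta> j))"
    using assms by (intro sum.cong refl expectation_adj) auto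
  finally show ?thesis by (simp add: dbar_def deg_def edge_noise_def sum_subtractf)
qed

lemma sum_off_diagonal:
  "(\<Sum>i<n. \<Sum>j\<in>{..<n}-{i}. f i j) = (\<Sum>(i, j)\<in>pairs n. f i j + f j i)"
proof -
  have "(\<Sum>i<n. \<Sum>j\<in>{..<n}-{i}. f i j) = (\<Sum>(i, j)\<in>(SIGMA i:{..<n}. {..<n}-{i}). f i j)"
    by (rule sum.Sigma) auto
  also have "(SIGMA i:{..<n}. {..<n}-{i}) = pairs n \<union> prod.swap ` pairs n"
    by (auto simp: pairs_def image_iff)
  also have "(\<Sum>(i, j)\<in>pairs n \<union> prod.swap ` pairs n. f i j)
      = (\<Sum>(i, j)\<in>pairs n. f i j) + (\<Sum>(i, j)\<in>prod.swap ` pairs n. f i j)"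
    by (rule sum.union_disjoint) (simp_all, force simp: pairs_def)
  also have "(\<Sum>(i, j)\<in>prod.swap ` pairs n. f i j) = (\<Sum>(i, j)\<in>pairs n. f j i)"
    by (subst sum.reindex) (auto simp: case_prod_unfold)
  finally show ?thesis by (simp add: sum.distrib case_prod_unfold)
qed

definition dbar_comb :: "nat \<Rightarrow> (nat \<Rightarrow> real) \<Rightarrow> (nat \<Rightarrow> real) \<Rightarrow> (nat \<times> nat \<Rightarrow> bool) \<Rightarrow> real" where
  "dbar_comb n \<beta> x a = (\<Sum>i<n. x i * dbar n \<beta> i a)"

definition pair_form :: "nat \<Rightarrow> (nat \<Rightarrow> nat \<Rightarrow> real) \<Rightarrow> (nat \<Rightarrow> real) \<Rightarrow> (nat \<Rightarrow> real) \<Rightarrow> real" where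
  "pair_form n v x y = (\<Sum>(i, j)\<in>pairs n. (x i + x j) * (y i + y j) * v i j)"

lemma dbar_comb_eq_edge_sum:
  "dbar_comb n \<beta> x a = (\<Sum>(i, j)\<in>pairs n. (x i + x j) * edge_noise \<beta> a i j)"
proof -
  have "dbar_comb n \<beta> x a = (\<Sum>i<n. \<Sum>j\<in>{..<n}-{i}. x i * edge_noise \<beta> a i j)"
    by (simp add: dbar_comb_def dbar_eq_edge_noise_sum sum_distrib_left)
  also have "\<dots> = (\<Sum>(i, j)\<in>pairs n. (x i + x j) * edge_noise \<beta> a i j)"
    unfolding sum_off_diagonal
    by (intro sum.cong refl) (clarsimp simp: distrib_right edge_noise_commute[of \<beta> a])
  finally show ?thesis .
qed

lemma expectation_dbar_comb_mult:
  "expect n \<beta> (\<lambda>a. dbar_comb n \<beta> x a * dbar_comb n \<beta> y a) = pair_form n (vv \<beta>) x y"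
  unfolding dbar_comb_eq_edge_sum pair_form_def
  by (rule expectation_edge_sum_mult[where x = "\<lambda>i j. x i + x j" and y = "\<lambda>i j. y i + y j"])

section \<open>V and Vtil as Gram matrices of the pair form\<close>

definition bilin :: "real mat \<Rightarrow> (nat \<Rightarrow> real) \<Rightarrow> (nat \<Rightarrow> real) \<Rightarrow> real" where
  "bilin A x y = (\<Sum>i<dim_row A. x i * (\<Sum>j<dim_col A. A $$ (i, j) * y j))"

lemma bilin_unit_left:
  "k < dim_row A \<Longrightarrow> bilin A (\<lambda>i. of_bool (i = k)) y = (\<Sum>j<dim_col A. A $$ (k, j) * y j)"
  unfolding bilin_def by (subst sum.remove[of _ k]) auto

lemma Vmat_row:
  assumes "i < n"
  shows "(\<Sum>j<n. Vmat n \<beta> $$ (i, j) * y j) = (\<Sum>j\<in>{..<n}-{i}. (y i + y j) * vv \<beta> i j)"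
proof -
  have "(\<Sum>j<n. Vmat n \<beta> $$ (i, j) * y j)
      = Vmat n \<beta> $$ (i, i) * y i + (\<Sum>j\<in>{..<n}-{i}. Vmat n \<beta> $$ (i, j) * y j)"
    using assms by (subst sum.remove[of _ i]) auto
  also have "\<dots> = (\<Sum>j\<in>{..<n}-{i}. vv \<beta> i j) * y i + (\<Sum>j\<in>{..<n}-{i}. vv \<beta> i j * y j)"
    using assms by (simp add: Vmat_def)
  also have "\<dots> = (\<Sum>j\<in>{..<n}-{i}. (y i + y j) * vv \<beta> i j)"
    by (simp add: sum_distrib_left sum_distrib_right sum.distrib algebra_simps)
  finally show ?thesis .
qed

lemma dim_Vmat [simp]: "dim_row (Vmat n \<beta>) = n" "dim_col (Vmat n \<beta>) = n"
  by (simp_all add: Vmat_def)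

lemma bilin_Vmat: "bilin (Vmat n \<beta>) x y = pair_form n (vv \<beta>) x y"
proof -
  have "bilin (Vmat n \<beta>) x y = (\<Sum>i<n. \<Sum>j\<in>{..<n}-{i}. x i * ((y i + y j) * vv \<beta> i j))"
    by (simp add: bilin_def Vmat_row sum_distrib_left)
  also have "\<dots> = pair_form n (vv \<beta>) x y"
    unfolding sum_off_diagonal pair_form_def
    by (intro sum.cong refl) (clarsimp simp: vv_commute[of \<beta> _ _] algebra_simps)
  finally show ?thesis .
qed

(* Merging the first r vertices: sum_k u_k dtil_k = sum_i (lift r u)_i d_i, see dbar_comb_lift. *)
definition lift :: "nat \<Rightarrow> (nat \<Rightarrow> real) \<Rightarrow> nat \<Rightarrow> real" where
  "lift r u i = (if i < r then u 0 else u (i + 1 - r))"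

lemma sum_lift:
  assumes "r \<le> n"
  shows "(\<Sum>i<n. lift r u i * R i) = u 0 * (\<Sum>i<r. R i) + (\<Sum>k<n-r. u (Suc k) * R (r + k))"
proof -
  have ivl: "{..<n} = {..<r} \<union> {r..<n}" using assms by auto
  have "(\<Sum>i<n. lift r u i * R i) = (\<Sum>i<r. lift r u i * R i) + (\<Sum>i\<in>{r..<n}. lift r u i * R i)"
    unfolding ivl by (rule sum.union_disjoint) auto
  also have "(\<Sum>i<r. lift r u i * R i) = u 0 * (\<Sum>i<r. R i)"
    by (simp add: lift_def sum_distrib_left)
  also have "(\<Sum>i\<in>{r..<n}. lift r u i * R i) = (\<Sum>k<n-r. u (Suc k) * R (r + k))"
    by (rule sum.reindex_bij_witness[of _ "\<lambda>k. r + k" "\<lambda>i. i - r"]) (auto simp: lift_def Suc_diff_le)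
  finally show ?thesis .
qed

lemma centred_dtil:
  "dtil n r a k - expect n \<beta> (\<lambda>b. dtil n r b k)
   = (if k = 0 then (\<Sum>i<r. dbar n \<beta> i a) else dbar n \<beta> (r + k - 1) a)"
  by (simp add: dtil_def dbar_def sum_subtractf)

lemma dbar_comb_lift:
  assumes "r \<le> n"
  shows "dbar_comb n \<beta> (lift r u) a
       = (\<Sum>k<n-r+1. u k * (dtil n r a k - expect n \<beta> (\<lambda>b. dtil n r b k)))"
  unfolding dbar_comb_def sum_lift[OF assms] Suc_eq_plus1[symmetric] sum.lessThan_Suc_shift
  by (simp add: centred_dtil)

lemma dim_Vtil [simp]: "dim_row (Vtil n r \<beta>) = n - r + 1" "dim_col (Vtil n r \<beta>) = n - r + 1"
  by (simp_all add: Vtil_def)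

lemma bilin_Vtil:
  assumes "r \<le> n"
  shows "bilin (Vtil n r \<beta>) u w = pair_form n (vv \<beta>) (lift r u) (lift r w)"
proof -
  define Y where "Y k a = dtil n r a k - expect n \<beta> (\<lambda>b. dtil n r b k)" for k a
  define K where "K = {..<n-r+1}"
  have "bilin (Vtil n r \<beta>) u w = (\<Sum>k\<in>K. \<Sum>l\<in>K. expect n \<beta> (\<lambda>a. u k * Y k a * (w l * Y l a)))"
    by (simp add: bilin_def Vtil_def Y_def K_def sum_distrib_left algebra_simps)
  also have "\<dots> = expect n \<beta> (\<lambda>a. (\<Sum>k\<in>K. u k * Y k a) * (\<Sum>l\<in>K. w l * Y l a))"
    by (simp add: sum_product)
  also have "\<dots> = pair_form n (vv \<beta>) (lift r u) (lift r w)"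
    unfolding Y_def K_def dbar_comb_lift[OF assms, symmetric] by (rule expectation_dbar_comb_mult)
  finally show ?thesis .
qed

section \<open>A lower bound for the pair form on lifted vectors\<close>

lemma pair_form_diag: "pair_form n v x x = (\<Sum>(i, j)\<in>pairs n. (x i + x j)^2 * v i j)"
  by (simp add: pair_form_def power2_eq_square)

lemma pair_form_nonneg:
  assumes "\<And>i j. (i, j) \<in> pairs n \<Longrightarrow> 0 \<le> v i j"
  shows "0 \<le> pair_form n v x x"
  unfolding pair_form_diag using assms by (intro sum_nonneg) auto

lemma pair_form_eq_0_imp_zero:
  assumes n: "3 \<le> n" and v: "\<And>i j. (i, j) \<in> pairs n \<Longrightarrow> 0 < v i j"
    and form: "pair_form n v x x = 0" and i: "i < n"
  shows "x i = 0"
proof -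
  have nonneg: "0 \<le> (\<lambda>(k, l). (x k + x l)^2 * v k l) e" if "e \<in> pairs n" for e
    using that by (cases e) (auto intro!: mult_nonneg_nonneg less_imp_le[OF v])
  have le_0: "(x k + x l)^2 * v k l \<le> 0" if "(k, l) \<in> pairs n" for k l
    using member_le_sum[OF that, of "\<lambda>(k, l). (x k + x l)^2 * v k l"] nonneg form
    by (auto simp: pair_form_diag)
  have sum_0: "x k + x l = 0" if "k < l" "l < n" for k l
  proof -
    have "(x k + x l)^2 * v k l \<le> 0" "0 < v k l" using that le_0 v by (auto simp: pairs_def)
    then show ?thesis by (simp add: mult_le_0_iff)
  qed
  have "x 0 + x 1 = 0" "x 0 + x 2 = 0" "x 1 + x 2 = 0" using sum_0 n by auto
  then have "x 0 = 0" by linarith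
  then show ?thesis using sum_0[of 0 i] i by (cases "i = 0") auto
qed

lemma sum_pairs_nested: "(\<Sum>(i, j)\<in>pairs n. f i j) = (\<Sum>j<n. \<Sum>i<j. f i j)"
proof -
  have "pairs n = prod.swap ` (SIGMA j:{..<n}. {..<j})"
    by (auto simp: pairs_def image_iff)
  then have "(\<Sum>(i, j)\<in>pairs n. f i j) = (\<Sum>(j, i)\<in>(SIGMA j:{..<n}. {..<j}). f i j)"
    by (simp add: sum.reindex case_prod_unfold)
  also have "\<dots> = (\<Sum>j<n. \<Sum>i<j. f i j)"
    by (rule sum.Sigma[symmetric]) auto
  finally show ?thesis .
qed

lemma sum_pairs_split:
  assumes "r \<le> n"
  shows "(\<Sum>(i, j)\<in>pairs n. f i j) = (\<Sum>(i, j)\<in>pairs r. f i j)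
           + (\<Sum>j\<in>{r..<n}. \<Sum>i<r. f i j) + (\<Sum>j\<in>{r..<n}. \<Sum>i\<in>{r..<j}. f i j)"
proof -
  have split_at_r: "(\<Sum>i<q. h i) = (\<Sum>i<r. h i) + (\<Sum>i\<in>{r..<q}. h i)"
    if "r \<le> q" for q and h :: "nat \<Rightarrow> 'a"
    using that by (simp add: lessThan_atLeast0 sum.atLeastLessThan_concat)
  have "(\<Sum>j\<in>{r..<n}. \<Sum>i<j. f i j) = (\<Sum>j\<in>{r..<n}. (\<Sum>i<r. f i j) + (\<Sum>i\<in>{r..<j}. f i j))"
    by (intro sum.cong refl) (rule split_at_r; simp)
  then show ?thesis
    unfolding sum_pairs_nested split_at_r[OF assms, of "\<lambda>j. \<Sum>i<j. f i j"]
    by (simp add: sum.distrib add.assoc)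
qed

lemma sum_pairs_square_sum:
  assumes "r \<le> n"
  shows "(\<Sum>j\<in>{r..<n}. \<Sum>i\<in>{r..<j}. (y i + y j)^2)
       = (real n - real r - 2) * (\<Sum>j\<in>{r..<n}. (y j)^2) + (\<Sum>j\<in>{r..<n}. y j)^2"
  using assms
proof (induction n)
  case 0
  then show ?case by simp
next
  case (Suc n)
  show ?case
  proof (cases "r = Suc n")
    case True
    then show ?thesis by simp
  next
    case False
    then have r: "r \<le> n" using Suc.prems by simp
    have ivl: "{r..<Suc n} = insert n {r..<n}" using r by auto
    have "(\<Sum>i\<in>{r..<n}. (y i + y n)^2)
        = (\<Sum>i\<in>{r..<n}. (y i)^2) + 2 * y n * (\<Sum>i\<in>{r..<n}. y i) + (real n - real r) * (y n)^2"
      using r by (simp add: power2_sum sum.distrib sum_distrib_left sum_distrib_right algebra_simps of_nat_diff)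
    then show ?thesis unfolding ivl using Suc.IH[OF r] by (simp add: power2_sum algebra_simps)
  qed
qed

lemma sum_pairs_square_lower:
  assumes "r \<le> n" "0 < b" and v: "\<And>i j. r \<le> i \<Longrightarrow> i < j \<Longrightarrow> j < n \<Longrightarrow> 1 / b \<le> v i j"
  shows "(real n - real r - 2) / b * (\<Sum>j\<in>{r..<n}. (y j)^2)
       \<le> (\<Sum>j\<in>{r..<n}. \<Sum>i\<in>{r..<j}. (y i + y j)^2 * v i j)"
proof -
  have "(real n - real r - 2) / b * (\<Sum>j\<in>{r..<n}. (y j)^2)
      \<le> 1 / b * ((real n - real r - 2) * (\<Sum>j\<in>{r..<n}. (y j)^2) + (\<Sum>j\<in>{r..<n}. y j)^2)"
    using assms(2) by (simp add: field_simps)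
  also have "\<dots> = 1 / b * (\<Sum>j\<in>{r..<n}. \<Sum>i\<in>{r..<j}. (y i + y j)^2)"
    by (simp only: sum_pairs_square_sum[OF assms(1)])
  also have "\<dots> = (\<Sum>j\<in>{r..<n}. \<Sum>i\<in>{r..<j}. (y i + y j)^2 * (1 / b))"
    by (simp add: sum_distrib_left mult.commute)
  also have "\<dots> \<le> (\<Sum>j\<in>{r..<n}. \<Sum>i\<in>{r..<j}. (y i + y j)^2 * v i j)"
    using v by (intro sum_mono mult_left_mono) auto
  finally show ?thesis .
qed

lemma completing_square_lower:
  fixes \<alpha> B \<epsilon> a t :: real
  assumes "0 < B" "0 \<le> \<alpha>" "\<alpha> \<le> \<epsilon> * B"
  shows "(1 - \<epsilon>) * \<alpha> * a^2 \<le> \<alpha> * (a + t)^2 + B * t^2"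
proof -
  have square: "\<alpha> * (a + t)^2 + B * t^2 = (1 - \<alpha> / B) * \<alpha> * a^2 + \<alpha> * t^2 + B * (t + \<alpha> / B * a)^2"
    using assms(1) by (simp add: field_simps power2_eq_square)
  have "\<alpha> / B \<le> \<epsilon>" using assms by (simp add: divide_le_eq)
  then have "(1 - \<epsilon>) * \<alpha> * a^2 \<le> (1 - \<alpha> / B) * \<alpha> * a^2"
    using assms(2) by (intro mult_right_mono) auto
  moreover have "0 \<le> \<alpha> * t^2" "0 \<le> B * (t + \<alpha> / B * a)^2" using assms by auto
  ultimately show ?thesis unfolding square by linarith
qed

lemma pair_form_lift_decomp:
  assumes "r \<le> n"
  shows "pair_form n v (lift r u) (lift r u)
       = (u 0)^2 * (\<Sum>(i, j)\<in>pairs r. 4 * v i j)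
         + (\<Sum>j\<in>{r..<n}. (\<Sum>i<r. v i j) * (u 0 + lift r u j)^2)
         + (\<Sum>j\<in>{r..<n}. \<Sum>i\<in>{r..<j}. (lift r u i + lift r u j)^2 * v i j)"
proof -
  have "(\<Sum>(i, j)\<in>pairs r. (lift r u i + lift r u j)^2 * v i j) = (u 0)^2 * (\<Sum>(i, j)\<in>pairs r. 4 * v i j)"
    by (simp add: sum_distrib_left case_prod_unfold lift_def pairs_def power2_eq_square algebra_simps)
  moreover have "(\<Sum>j\<in>{r..<n}. \<Sum>i<r. (lift r u i + lift r u j)^2 * v i j)
      = (\<Sum>j\<in>{r..<n}. (\<Sum>i<r. v i j) * (u 0 + lift r u j)^2)"
    by (simp add: sum_distrib_right lift_def mult.commute)
  ultimately show ?thesis unfolding pair_form_diag sum_pairs_split[OF assms] by simp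
qed

lemma pair_form_lift_lower:
  assumes n: "r + 3 \<le> n" and b: "0 < b" and c: "0 < c"
    and v: "\<And>i j. i < j \<Longrightarrow> j < n \<Longrightarrow> 1 / b \<le> v i j \<and> v i j \<le> 1 / c"
  defines "e0 \<equiv> \<lambda>k. of_bool (k = 0)"
  shows "(1 - r * b / (c * (real n - real r - 2))) * pair_form n v (lift r e0) (lift r e0) * (u 0)^2
       \<le> pair_form n v (lift r u) (lift r u)"
proof -
  define \<epsilon> where "\<epsilon> = r * b / (c * (real n - real r - 2))"
  define B where "B = (real n - real r - 2) / b"
  define \<alpha> where "\<alpha> j = (\<Sum>i<r. v i j)" for j
  define A where "A = (\<Sum>(i, j)\<in>pairs r. 4 * v i j)"
  let ?y = "lift r u"
  have r: "r \<le> n" and m: "1 \<le> real n - real r - 2" using n by auto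
  have v_nonneg: "0 \<le> v i j" if "i < j" "j < n" for i j
    using v[OF that] b by (smt (verit) divide_pos_pos)
  have B: "0 < B" using m b by (simp add: B_def)
  have eps: "0 \<le> \<epsilon>" using m b c by (simp add: \<epsilon>_def)
  have A: "0 \<le> A" unfolding A_def using n by (intro sum_nonneg) (auto simp: pairs_def v_nonneg)
  have \<alpha>: "0 \<le> \<alpha> j" "\<alpha> j \<le> \<epsilon> * B" if "j \<in> {r..<n}" for j
  proof -
    show "0 \<le> \<alpha> j" unfolding \<alpha>_def using that by (intro sum_nonneg v_nonneg) auto
    have "\<alpha> j \<le> (\<Sum>i<r. 1 / c)" unfolding \<alpha>_def using that v by (intro sum_mono) auto
    also have "\<dots> = \<epsilon> * B" using m b by (simp add: \<epsilon>_def B_def)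
    finally show "\<alpha> j \<le> \<epsilon> * B" .
  qed
  have sigma: "pair_form n v (lift r e0) (lift r e0) = A + (\<Sum>j\<in>{r..<n}. \<alpha> j)"
    unfolding pair_form_lift_decomp[OF r] by (simp add: A_def \<alpha>_def e0_def lift_def)
  have "(1 - \<epsilon>) * (u 0)^2 * (\<Sum>j\<in>{r..<n}. \<alpha> j) \<le> (\<Sum>j\<in>{r..<n}. \<alpha> j * (u 0 + ?y j)^2 + B * (?y j)^2)"
    unfolding sum_distrib_left by (intro sum_mono) (use \<alpha> completing_square_lower[OF B] in \<open>simp add: mult_ac\<close>)
  also have "\<dots> \<le> (\<Sum>j\<in>{r..<n}. \<alpha> j * (u 0 + ?y j)^2) + (\<Sum>j\<in>{r..<n}. \<Sum>i\<in>{r..<j}. (?y i + ?y j)^2 * v i j)"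
    using sum_pairs_square_lower[OF r b, of v ?y] v unfolding B_def by (simp add: sum.distrib sum_distrib_left)
  finally have "(1 - \<epsilon>) * (u 0)^2 * (A + (\<Sum>j\<in>{r..<n}. \<alpha> j)) \<le> pair_form n v ?y ?y"
    unfolding pair_form_lift_decomp[OF r] using eps A
    by (simp add: \<alpha>_def A_def algebra_simps) (smt (verit) mult_nonneg_nonneg zero_le_power2)
  then show ?thesis unfolding sigma \<epsilon>_def by (simp add: mult_ac)
qed

lemma finite_off_diagonal_values:
  fixes n :: nat
  shows "finite {f i j | i j. i < n \<and> j < n \<and> i \<noteq> j}"
proof -
  have "{f i j | i j. i < n \<and> j < n \<and> i \<noteq> j} \<subseteq> (\<lambda>(i, j). f i j) ` ({..<n} \<times> {..<n})" by auto
  moreover have "finite ((\<lambda>(i, j). f i j) ` ({..<n} \<times> {..<n}))" by (intro finite_imageI finite_cartesian_product) simp_all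
  ultimately show ?thesis by (rule finite_subset)
qed

lemma logistic_ratio_ge_4: "4 \<le> (1 + exp x)^2 / exp (x :: real)"
proof -
  have "(1 + exp x)^2 - 4 * exp x = (1 - exp x)^2" by (simp add: power2_eq_square algebra_simps)
  then have "4 * exp x \<le> (1 + exp x)^2" by (smt (verit) zero_le_power2)
  then show ?thesis by (simp add: le_divide_eq)
qed

lemma cn_le_bn_at:
  assumes "i < n" "j < n" "i \<noteq> j"
  shows "cn n \<beta> \<le> (1 + exp (\<beta> i + \<beta> j))^2 / exp (\<beta> i + \<beta> j)"
    and "(1 + exp (\<beta> i + \<beta> j))^2 / exp (\<beta> i + \<beta> j) \<le> bn n \<beta>"
proof -
  have "(1 + exp (\<beta> i + \<beta> j))^2 / exp (\<beta> i + \<beta> j)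
        \<in> {(1 + exp (\<beta> i + \<beta> j))^2 / exp (\<beta> i + \<beta> j) | i j. i < n \<and> j < n \<and> i \<noteq> j}"
    using assms by blast
  then show "cn n \<beta> \<le> (1 + exp (\<beta> i + \<beta> j))^2 / exp (\<beta> i + \<beta> j)"
    and "(1 + exp (\<beta> i + \<beta> j))^2 / exp (\<beta> i + \<beta> j) \<le> bn n \<beta>"
    unfolding cn_def bn_def
    by (rule Min_le[OF finite_off_diagonal_values], rule Max_ge[OF finite_off_diagonal_values])
qed

lemma cn_ge_4:
  assumes "2 \<le> n"
  shows "4 \<le> cn n \<beta>"
proof -
  let ?S = "{(1 + exp (\<beta> i + \<beta> j))^2 / exp (\<beta> i + \<beta> j) | i j. i < n \<and> j < n \<and> i \<noteq> j}"
  have "(1 + exp (\<beta> 0 + \<beta> 1))^2 / exp (\<beta> 0 + \<beta> 1) \<in> ?S" using assms by force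
  moreover have "\<forall>q\<in>?S. 4 \<le> q" using logistic_ratio_ge_4 by auto
  ultimately show ?thesis
    unfolding cn_def using finite_off_diagonal_values by (subst Min_ge_iff) auto
qed

lemma cn_le_bn:
  assumes "2 \<le> n"
  shows "cn n \<beta> \<le> bn n \<beta>"
proof -
  have "0 < n" "1 < n" using assms by auto
  then show ?thesis using cn_le_bn_at[of 0 n 1 \<beta>] by linarith
qed

lemma ratio_cube_le:
  assumes "2 \<le> n"
  shows "(bn n \<beta> / cn n \<beta>)^3 \<le> bn n \<beta> ^ 3 / cn n \<beta> ^ 2"
proof -
  have c: "4 \<le> cn n \<beta>" "cn n \<beta> \<le> bn n \<beta>" using assms by (auto intro: cn_ge_4 cn_le_bn)
  then have "cn n \<beta> ^ 2 \<le> cn n \<beta> ^ 3" by (intro power_increasing) auto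
  moreover have "0 \<le> bn n \<beta> ^ 3" "0 < cn n \<beta> ^ 3 * cn n \<beta> ^ 2" using c by auto
  ultimately show ?thesis unfolding power_divide by (rule divide_left_mono)
qed

lemma vv_between_bn_cn:
  assumes "i < n" "j < n" "i \<noteq> j"
  shows "1 / bn n \<beta> \<le> vv \<beta> i j" "vv \<beta> i j \<le> 1 / cn n \<beta>"
proof -
  let ?q = "(1 + exp (\<beta> i + \<beta> j))^2 / exp (\<beta> i + \<beta> j)"
  have vv: "vv \<beta> i j = 1 / ?q" by (simp add: vv_def)
  have c4: "4 \<le> cn n \<beta>" using assms by (intro cn_ge_4) auto
  have q: "cn n \<beta> \<le> ?q" "?q \<le> bn n \<beta>" by (rule cn_le_bn_at[OF assms])+
  show "1 / bn n \<beta> \<le> vv \<beta> i j" unfolding vv by (rule frac_le) (use c4 q in auto)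
  show "vv \<beta> i j \<le> 1 / cn n \<beta>" unfolding vv by (rule frac_le) (use c4 q in auto)
qed

lemma mat_inv_sums_if_definite:
  fixes A :: "real mat"
  assumes A: "A \<in> carrier_mat k k"
    and definite: "\<And>x. bilin A x x = 0 \<Longrightarrow> \<forall>i<k. x i = 0"
    and ij: "i < k" "j < k"
  shows "(\<Sum>l<k. A $$ (i, l) * mat_inv A $$ (l, j)) = of_bool (i = j)"
    and "(\<Sum>l<k. mat_inv A $$ (i, l) * A $$ (l, j)) = of_bool (i = j)"
proof -
  have "det A \<noteq> 0"
  proof
    assume "det A = 0"
    then obtain v where v: "v \<in> carrier_vec k" "v \<noteq> 0\<^sub>v k" "A *\<^sub>v v = 0\<^sub>v k"
      using det_0_iff_vec_prod_zero_field[OF A] by blast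
    have "(\<Sum>j<k. A $$ (i, j) * v $ j) = 0" if "i < k" for i
    proof -
      have "(A *\<^sub>v v) $ i = 0" using v(3) that by simp
      then show ?thesis using that A v(1) by (simp add: scalar_prod_def atLeast0LessThan)
    qed
    then have "bilin A (\<lambda>j. v $ j) (\<lambda>j. v $ j) = 0" using A by (simp add: bilin_def)
    then have "v $ i = 0" if "i < k" for i using definite that by blast
    then have "v = 0\<^sub>v k" using v(1) by (intro eq_vecI) auto
    with v(2) show False by simp
  qed
  from det_non_zero_imp_unit[OF A this, of "()"]
  obtain B where "B \<in> carrier_mat k k" "A * B = 1\<^sub>m k" "B * A = 1\<^sub>m k"
    unfolding Units_def ring_mat_def by auto
  then have "\<exists>B. inverts_mat A B \<and> inverts_mat B A" using A by (auto simp: inverts_mat_def)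
  then have "inverts_mat A (mat_inv A) \<and> inverts_mat (mat_inv A) A"
    unfolding mat_inv_def by (rule someI_ex)
  then have AM: "A * mat_inv A = 1\<^sub>m k" and MA: "mat_inv A * A = 1\<^sub>m (dim_row (mat_inv A))"
    using A by (auto simp: inverts_mat_def)
  have dim: "dim_col (mat_inv A) = k" "dim_row (mat_inv A) = k"
    using arg_cong[OF AM, of dim_col] arg_cong[OF MA, of dim_col] A by auto
  show "(\<Sum>l<k. A $$ (i, l) * mat_inv A $$ (l, j)) = of_bool (i = j)"
    using arg_cong[OF AM, of "\<lambda>M. M $$ (i, j)"] ij A dim
    by (simp add: scalar_prod_def atLeast0LessThan)
  show "(\<Sum>l<k. mat_inv A $$ (i, l) * A $$ (l, j)) = of_bool (i = j)"
    using arg_cong[OF MA, of "\<lambda>M. M $$ (i, j)"] ij A dim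
    by (simp add: scalar_prod_def atLeast0LessThan)
qed

lemma Vmat_inv_left:
  assumes "3 \<le> n" "i < n" "j < n"
  shows "(\<Sum>l<n. mat_inv (Vmat n \<beta>) $$ (i, l) * Vmat n \<beta> $$ (l, j)) = of_bool (i = j)"
proof (rule mat_inv_sums_if_definite(2)[OF _ _ assms(2,3)])
  show "Vmat n \<beta> \<in> carrier_mat n n" by (simp add: Vmat_def)
  show "\<forall>i<n. x i = 0" if "bilin (Vmat n \<beta>) x x = 0" for x
    using that pair_form_eq_0_imp_zero[OF assms(1), of "vv \<beta>" x] vv_pos by (simp add: bilin_Vmat)
qed

lemma Vtil_inv_right:
  assumes r: "0 < r" "r + 3 \<le> n" and kl: "k < n - r + 1" "l < n - r + 1"
  shows "(\<Sum>j<n-r+1. Vtil n r \<beta> $$ (k, j) * mat_inv (Vtil n r \<beta>) $$ (j, l)) = of_bool (k = l)"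
proof (rule mat_inv_sums_if_definite(1)[OF _ _ kl])
  show "Vtil n r \<beta> \<in> carrier_mat (n-r+1) (n-r+1)" by (simp add: Vtil_def)
  show "\<forall>k<n-r+1. x k = 0" if "bilin (Vtil n r \<beta>) x x = 0" for x
  proof (intro allI impI)
    fix k assume k: "k < n - r + 1"
    have lift_0: "lift r x i = 0" if "i < n" for i
      using \<open>bilin (Vtil n r \<beta>) x x = 0\<close> pair_form_eq_0_imp_zero[of n "vv \<beta>" "lift r x" i] r that vv_pos
      by (simp add: bilin_Vtil)
    show "x k = 0"
    proof (cases "k = 0")
      case True
      then show ?thesis using lift_0[of 0] r by (simp add: lift_def)
    next
      case False
      then obtain k' where "k = Suc k'" by (cases k) auto
      then show ?thesis using lift_0[of "r + k'"] k by (simp add: lift_def)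
    qed
  qed
qed

section \<open>The first column of the inverse of Vtil\<close>

lemma expectation_abs_mult_le_sqrt:
  fixes X Y :: "'a \<Rightarrow> real"
  assumes "finite (set_pmf p)"
  shows "measure_pmf.expectation p (\<lambda>a. \<bar>X a * Y a\<bar>)
       \<le> sqrt (measure_pmf.expectation p (\<lambda>a. (X a)^2) * measure_pmf.expectation p (\<lambda>a. (Y a)^2))"
proof -
  have E: "measure_pmf.expectation p f = (\<Sum>a\<in>set_pmf p. pmf p a * f a)" for f :: "'a \<Rightarrow> real"
    using assms by (subst integral_measure_pmf[of "set_pmf p"]) auto
  have "pmf p a * \<bar>X a * Y a\<bar> = (sqrt (pmf p a) * \<bar>X a\<bar>) * (sqrt (pmf p a) * \<bar>Y a\<bar>)" for a
  proof -
    have "(sqrt (pmf p a) * \<bar>X a\<bar>) * (sqrt (pmf p a) * \<bar>Y a\<bar>)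
        = (sqrt (pmf p a) * sqrt (pmf p a)) * \<bar>X a * Y a\<bar>"
      by (simp add: abs_mult mult_ac)
    then show ?thesis by simp
  qed
  then have "(\<Sum>a\<in>set_pmf p. pmf p a * \<bar>X a * Y a\<bar>)
      = (\<Sum>a\<in>set_pmf p. (sqrt (pmf p a) * \<bar>X a\<bar>) * (sqrt (pmf p a) * \<bar>Y a\<bar>))"
    by simp
  then have "(\<Sum>a\<in>set_pmf p. pmf p a * \<bar>X a * Y a\<bar>)^2
      \<le> (\<Sum>a\<in>set_pmf p. (sqrt (pmf p a) * \<bar>X a\<bar>)^2) * (\<Sum>a\<in>set_pmf p. (sqrt (pmf p a) * \<bar>Y a\<bar>)^2)"
    by (simp only: Cauchy_Schwarz_ineq_sum)
  also have "\<dots> = (\<Sum>a\<in>set_pmf p. pmf p a * (X a)^2) * (\<Sum>a\<in>set_pmf p. pmf p a * (Y a)^2)"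
    by (simp add: power_mult_distrib)
  finally show ?thesis unfolding E by (rule real_le_rsqrt)
qed

definition ratio_eps :: "nat \<Rightarrow> nat \<Rightarrow> (nat \<Rightarrow> real) \<Rightarrow> real" where
  "ratio_eps n r \<beta> = r * bn n \<beta> / (cn n \<beta> * (real n - real r - 2))"

context
  fixes n r :: nat and \<beta> :: "nat \<Rightarrow> real"
  assumes r_pos: "0 < r" and n_large: "r + 3 \<le> n" and eps_small: "ratio_eps n r \<beta> \<le> 1/2"
begin

abbreviation "\<sigma> \<equiv> Vtil n r \<beta> $$ (0, 0)"
abbreviation "\<epsilon> \<equiv> ratio_eps n r \<beta>"
abbreviation "e0 \<equiv> \<lambda>k :: nat. of_bool (k = 0) :: real"
abbreviation "g \<equiv> \<lambda>l. mat_inv (Vtil n r \<beta>) $$ (l, 0)"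

lemma ratio_eps_pos: "0 < \<epsilon>"
proof -
  have "4 \<le> cn n \<beta>" "cn n \<beta> \<le> bn n \<beta>"
    using n_large by (auto intro: cn_ge_4 cn_le_bn)
  then show ?thesis unfolding ratio_eps_def using r_pos n_large by (intro divide_pos_pos mult_pos_pos) auto
qed

lemma sigma_eq: "\<sigma> = pair_form n (vv \<beta>) (lift r e0) (lift r e0)"
  using bilin_unit_left[of 0 "Vtil n r \<beta>" e0] bilin_Vtil[of r n \<beta> e0 e0] n_large
  by (simp add: of_bool_def if_distrib cong: if_cong)

lemma sigma_pos: "0 < \<sigma>"
proof -
  have "0 \<le> \<sigma>" unfolding sigma_eq by (rule pair_form_nonneg) (simp add: less_imp_le vv_pos)
  moreover have "\<sigma> \<noteq> 0"
    using pair_form_eq_0_imp_zero[of n "vv \<beta>" "lift r e0" 0] n_large r_pos vv_pos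
    by (auto simp: sigma_eq lift_def)
  ultimately show ?thesis by simp
qed

lemma pair_form_lift_inv_col: "pair_form n (vv \<beta>) (lift r u) (lift r g) = u 0"
proof -
  have "pair_form n (vv \<beta>) (lift r u) (lift r g) = (\<Sum>k<n-r+1. u k * of_bool (k = 0))"
    unfolding bilin_Vtil[symmetric, OF n_large[THEN add_leD1]] bilin_def dim_Vtil
    by (intro sum.cong refl) (simp only: Vtil_inv_right[OF r_pos n_large] lessThan_iff)
  then show ?thesis by simp
qed

lemma pair_form_lift_ge: "(1 - \<epsilon>) * \<sigma> * (u 0)^2 \<le> pair_form n (vv \<beta>) (lift r u) (lift r u)"
  unfolding sigma_eq ratio_eps_def
proof (rule pair_form_lift_lower[OF n_large])
  have "4 \<le> cn n \<beta>" "cn n \<beta> \<le> bn n \<beta>"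
    using n_large by (auto intro: cn_ge_4 cn_le_bn)
  then show "0 < bn n \<beta>" "0 < cn n \<beta>" by auto
  show "1 / bn n \<beta> \<le> vv \<beta> i j \<and> vv \<beta> i j \<le> 1 / cn n \<beta>" if "i < j" "j < n" for i j
    using vv_between_bn_cn[of i n j \<beta>] that by auto
qed

lemma inv_col_bounds: "1 \<le> g 0 * \<sigma>" "g 0 * \<sigma> \<le> 1 / (1 - \<epsilon>)"
proof -
  let ?T = "\<lambda>u. dbar_comb n \<beta> (lift r u)"
  have "1 = expect n \<beta> (\<lambda>a. ?T e0 a * ?T g a)"
    by (simp add: expectation_dbar_comb_mult pair_form_lift_inv_col)
  also have "\<dots> \<le> expect n \<beta> (\<lambda>a. \<bar>?T e0 a * ?T g a\<bar>)" by (rule integral_mono) auto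
  also have "\<dots> \<le> sqrt (expect n \<beta> (\<lambda>a. (?T e0 a)^2) * expect n \<beta> (\<lambda>a. (?T g a)^2))"
    by (rule expectation_abs_mult_le_sqrt[OF finite_set_pmf_beta_pmf])
  also have "\<dots> = sqrt (\<sigma> * g 0)"
    by (simp add: power2_eq_square expectation_dbar_comb_mult pair_form_lift_inv_col sigma_eq)
  finally show lower: "1 \<le> g 0 * \<sigma>" by (simp add: mult.commute)
  have g0: "0 < g 0" using lower sigma_pos by (smt (verit) mult_nonpos_nonneg)
  have "(1 - \<epsilon>) * \<sigma> * g 0 * g 0 \<le> 1 * g 0"
    using pair_form_lift_ge[of g] by (simp add: pair_form_lift_inv_col power2_eq_square)
  then have "(1 - \<epsilon>) * \<sigma> * g 0 \<le> 1" using g0 by (rule mult_right_le_imp_le)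
  moreover have "0 < 1 - \<epsilon>" using eps_small by simp
  ultimately show "g 0 * \<sigma> \<le> 1 / (1 - \<epsilon>)" by (simp add: pos_le_divide_eq mult_ac)
qed

lemma inv_col_excess: "g 0 * \<sigma> - 1 \<le> 2 * \<epsilon>"
proof -
  have "g 0 * \<sigma> - 1 \<le> 1 / (1 - \<epsilon>) - 1" using inv_col_bounds(2) by simp
  also have "\<dots> = \<epsilon> / (1 - \<epsilon>)" using eps_small by (simp add: field_simps)
  also have "\<dots> \<le> \<epsilon> / (1 / 2)" using eps_small ratio_eps_pos by (intro divide_left_mono) auto
  finally show ?thesis by simp
qed

lemma sum_first_dbar: "(\<Sum>i<r. dbar n \<beta> i a) = dbar_comb n \<beta> (lift r e0) a"
  using n_large by (simp add: dbar_comb_def sum_lift)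

lemma wtil11_eq: "wtil11 n r \<beta> = g 0 - 1 / \<sigma>"
  unfolding wtil11_def Wtil_def by (simp add: Stil_def)

lemma wtil12_sum:
  "(\<Sum>j<n-r. wtil12 n r \<beta> j * dbar n \<beta> (r + j) a)
   = dbar_comb n \<beta> (lift r g) a - g 0 * dbar_comb n \<beta> (lift r e0) a"
proof -
  have "dbar_comb n \<beta> (lift r g) a
      = g 0 * (\<Sum>i<r. dbar n \<beta> i a) + (\<Sum>j<n-r. g (Suc j) * dbar n \<beta> (r + j) a)"
    using n_large by (simp add: dbar_comb_def sum_lift)
  moreover have "wtil12 n r \<beta> j = g (Suc j)" if "j < n - r" for j
    using that by (simp add: wtil12_def Wtil_def Stil_def)
  ultimately show ?thesis by (simp add: sum_first_dbar)
qed

lemma expectation_w11_stat: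
  "expect n \<beta> (\<lambda>a. \<bar>(\<Sum>i<r. dbar n \<beta> i a) * wtil11 n r \<beta> * (\<Sum>i<r. dbar n \<beta> i a)\<bar>) \<le> 2 * \<epsilon>"
proof -
  let ?T = "\<lambda>u. dbar_comb n \<beta> (lift r u)"
  have w: "0 \<le> g 0 - 1 / \<sigma>" using inv_col_bounds(1) sigma_pos by (simp add: field_simps)
  have "\<bar>(\<Sum>i<r. dbar n \<beta> i a) * wtil11 n r \<beta> * (\<Sum>i<r. dbar n \<beta> i a)\<bar>
      = (g 0 - 1 / \<sigma>) * (?T e0 a * ?T e0 a)" for a
    using w by (simp add: sum_first_dbar wtil11_eq abs_mult)
  then have "expect n \<beta> (\<lambda>a. \<bar>(\<Sum>i<r. dbar n \<beta> i a) * wtil11 n r \<beta> * (\<Sum>i<r. dbar n \<beta> i a)\<bar>)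
      = (g 0 - 1 / \<sigma>) * \<sigma>"
    by (simp add: expectation_dbar_comb_mult sigma_eq)
  also have "\<dots> = g 0 * \<sigma> - 1" using sigma_pos by (simp add: field_simps)
  finally show ?thesis using inv_col_excess by simp
qed

lemma expectation_w12_stat:
  "expect n \<beta> (\<lambda>a. \<bar>(\<Sum>i<r. dbar n \<beta> i a) * (\<Sum>j<n-r. wtil12 n r \<beta> j * dbar n \<beta> (r + j) a)\<bar>)
   \<le> 2 * sqrt \<epsilon>"
proof -
  let ?T = "\<lambda>u. dbar_comb n \<beta> (lift r u)"
  define Z where "Z a = ?T g a - g 0 * ?T e0 a" for a
  have EZ: "expect n \<beta> (\<lambda>a. (Z a)^2) = g 0 * (g 0 * \<sigma> - 1)"
  proof -
    have "expect n \<beta> (\<lambda>a. (Z a)^2) = expect n \<beta> (\<lambda>a. ?T g a * ?T g a)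
        - 2 * g 0 * expect n \<beta> (\<lambda>a. ?T e0 a * ?T g a) + (g 0)^2 * expect n \<beta> (\<lambda>a. ?T e0 a * ?T e0 a)"
      by (simp add: Z_def power2_eq_square algebra_simps)
    then show ?thesis
      by (simp add: expectation_dbar_comb_mult pair_form_lift_inv_col sigma_eq power2_eq_square algebra_simps)
  qed
  have ET: "expect n \<beta> (\<lambda>a. (?T e0 a)^2) = \<sigma>"
    by (simp add: power2_eq_square expectation_dbar_comb_mult sigma_eq)
  have q: "0 \<le> g 0 * \<sigma> - 1" "g 0 * \<sigma> - 1 \<le> 2 * \<epsilon>" "g 0 * \<sigma> \<le> 2"
    using inv_col_bounds(1) inv_col_excess eps_small by auto
  have "expect n \<beta> (\<lambda>a. \<bar>(\<Sum>i<r. dbar n \<beta> i a) * (\<Sum>j<n-r. wtil12 n r \<beta> j * dbar n \<beta> (r + j) a)\<bar>)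
      = expect n \<beta> (\<lambda>a. \<bar>?T e0 a * Z a\<bar>)"
    by (simp add: sum_first_dbar wtil12_sum Z_def)
  also have "\<dots> \<le> sqrt (expect n \<beta> (\<lambda>a. (?T e0 a)^2) * expect n \<beta> (\<lambda>a. (Z a)^2))"
    by (rule expectation_abs_mult_le_sqrt[OF finite_set_pmf_beta_pmf])
  also have "\<dots> = sqrt ((g 0 * \<sigma>) * (g 0 * \<sigma> - 1))"
    unfolding EZ ET by (simp add: mult_ac)
  also have "\<dots> \<le> sqrt (2 * (2 * \<epsilon>))"
    using q by (intro real_sqrt_le_mono mult_mono) auto
  also have "\<dots> = 2 * sqrt \<epsilon>" by (simp add: real_sqrt_mult)
  finally show ?thesis .
qed

end

section \<open>Coincidence of the lower-right blocks\<close>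

context
  fixes n r :: nat and \<beta> :: "nat \<Rightarrow> real"
  assumes r_pos: "0 < r" and n_large: "r + 3 \<le> n" and \<beta>_sym: "\<And>i. i < r \<Longrightarrow> \<beta> i = \<beta> 0"
begin

lemma Vmat_row_sym:
  assumes i: "i < r" and z: "\<And>k. k < r \<Longrightarrow> z k = z 0"
  shows "(\<Sum>j<n. Vmat n \<beta> $$ (i, j) * z j) = (\<Sum>j<n. Vmat n \<beta> $$ (0, j) * z j)"
proof -
  have row: "(\<Sum>j<n. Vmat n \<beta> $$ (i, j) * z j) = (\<Sum>j<n. (z 0 + z j) * vv \<beta> 0 j) - 2 * z 0 * vv \<beta> 0 0"
    if "i < r" for i
  proof -
    have vv_i: "vv \<beta> i j = vv \<beta> 0 j" for j using \<beta>_sym[OF that] by (simp add: vv_def)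
    have i_n: "i < n" using that n_large by simp
    have "(\<Sum>j<n. Vmat n \<beta> $$ (i, j) * z j) = (\<Sum>j\<in>{..<n}-{i}. (z 0 + z j) * vv \<beta> 0 j)"
      unfolding Vmat_row[OF i_n] using z[OF that] by (simp add: vv_i)
    also have "\<dots> = (\<Sum>j<n. (z 0 + z j) * vv \<beta> 0 j) - (z 0 + z i) * vv \<beta> 0 i"
      using i_n by (simp add: sum_diff1)
    also have "(z 0 + z i) * vv \<beta> 0 i = 2 * z 0 * vv \<beta> 0 0"
      using z[OF that] vv_i[of 0] vv_commute[of \<beta> 0 i] by simp
    finally show ?thesis .
  qed
  show ?thesis using row[OF i] row[OF r_pos] by simp
qed

lemma Vmat_lift_inv_col:
  assumes j: "j < n - r" and i: "i < n"
  defines "w \<equiv> \<lambda>l. mat_inv (Vtil n r \<beta>) $$ (l, j + 1)"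
  shows "(\<Sum>l<n. Vmat n \<beta> $$ (i, l) * lift r w l) = of_bool (i = r + j)"
proof -
  define R where "R i = (\<Sum>l<n. Vmat n \<beta> $$ (i, l) * lift r w l)" for i
  have r_n: "r \<le> n" using n_large by simp
  have rows: "of_bool (k = j + 1) = (if k = 0 then (\<Sum>i<r. R i) else R (r + k - 1))"
    if k: "k < n - r + 1" for k
  proof -
    have "of_bool (k = j + 1) = bilin (Vtil n r \<beta>) (\<lambda>l. of_bool (l = k)) w"
      using bilin_unit_left[of k "Vtil n r \<beta>" w] Vtil_inv_right[OF r_pos n_large k, of "j + 1"] k j
      by (simp add: w_def)
    also have "\<dots> = bilin (Vmat n \<beta>) (lift r (\<lambda>l. of_bool (l = k))) (lift r w)"
      by (simp only: bilin_Vtil[OF r_n] bilin_Vmat)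
    also have "\<dots> = (\<Sum>i<n. lift r (\<lambda>l. of_bool (l = k)) i * R i)"
      by (simp add: bilin_def R_def)
    also have "\<dots> = (if k = 0 then (\<Sum>i<r. R i) else R (r + k - 1))"
      using k by (cases k) (auto simp: sum_lift[OF r_n])
    finally show ?thesis .
  qed
  (* The first r entries of V (lift w) coincide since beta is constant there, and by the first
     row of Vtil w = e_(j+1) they sum to 0. *)
  have R_0: "R i = 0" if "i < r" for i
  proof -
    have const: "R i = R 0" if "i < r" for i
      unfolding R_def using that by (rule Vmat_row_sym) (simp add: lift_def)
    have "(\<Sum>i<r. R i) = (\<Sum>i<r. R 0)" by (rule sum.cong[OF refl]) (rule const, simp)
    then have "(\<Sum>i<r. R i) = r * R 0" by simp
    moreover have "(\<Sum>i<r. R i) = 0" using rows[of 0] by simp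
    ultimately show ?thesis using const[OF that] r_pos by simp
  qed
  show ?thesis
  proof (cases "i < r")
    case True
    then show ?thesis using R_0 by (simp add: R_def)
  next
    case False
    define l where "l = i - r"
    have l: "i = r + l" "l < n - r" using False i by (auto simp: l_def)
    then show ?thesis using rows[of "Suc l"] by (simp add: R_def)
  qed
qed

lemma Vmat_inv_block:
  assumes i: "i < n - r" and j: "j < n - r"
  shows "mat_inv (Vmat n \<beta>) $$ (r + i, r + j) = mat_inv (Vtil n r \<beta>) $$ (i + 1, j + 1)"
proof -
  let ?N = "mat_inv (Vmat n \<beta>)" and ?V = "Vmat n \<beta>"
  let ?z = "lift r (\<lambda>l. mat_inv (Vtil n r \<beta>) $$ (l, j + 1))"
  have n3: "3 \<le> n" using n_large by simp
  have "?z (r + i) = (\<Sum>l<n. of_bool (r + i = l) * ?z l)" using i by simp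
  also have "\<dots> = (\<Sum>l<n. (\<Sum>m<n. ?N $$ (r + i, m) * ?V $$ (m, l)) * ?z l)"
    using i by (intro sum.cong refl) (simp add: Vmat_inv_left[OF n3])
  also have "\<dots> = (\<Sum>l<n. \<Sum>m<n. ?N $$ (r + i, m) * (?V $$ (m, l) * ?z l))"
    by (simp add: sum_distrib_right mult.assoc)
  also have "\<dots> = (\<Sum>m<n. ?N $$ (r + i, m) * (\<Sum>l<n. ?V $$ (m, l) * ?z l))"
    by (subst sum.swap) (simp add: sum_distrib_left)
  also have "\<dots> = (\<Sum>m<n. ?N $$ (r + i, m) * of_bool (m = r + j))"
    by (intro sum.cong refl) (use Vmat_lift_inv_col[OF j] in simp)
  also have "\<dots> = ?N $$ (r + i, r + j)" using j by simp
  finally show ?thesis by (simp add: lift_def)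
qed

lemma W22_eq_Wtil22:
  assumes "i < n - r" "j < n - r"
  shows "W22 n r \<beta> $$ (i, j) = Wtil22 n r \<beta> $$ (i, j)"
  using assms Vmat_inv_block[OF assms]
  unfolding W22_def Wtil22_def Wmat_def Wtil_def by (simp add: Smat_def Stil_def)

end

section \<open>Convergence in probability\<close>

lemma op1_if_expectation_abs_le:
  assumes fin: "\<And>n. finite (set_pmf (P n))"
    and bound: "\<forall>\<^sub>F n in sequentially. measure_pmf.expectation (P n) (\<lambda>a. \<bar>X n a\<bar>) \<le> B n"
    and B: "B \<longlonglongrightarrow> 0"
  shows "op1 P X"
  unfolding op1_def
proof (intro allI impI)
  fix \<eta> :: real assume \<eta>: "0 < \<eta>"
  have markov: "measure_pmf.prob (P n) {a. \<eta> < \<bar>X n a\<bar>}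
      \<le> measure_pmf.expectation (P n) (\<lambda>a. \<bar>X n a\<bar>) / \<eta>" for n
  proof -
    have "measure_pmf.prob (P n) {a. \<eta> < \<bar>X n a\<bar>}
        \<le> measure_pmf.prob (P n) {a \<in> space (measure_pmf (P n)). \<eta> \<le> \<bar>X n a\<bar>}"
      by (intro measure_pmf.finite_measure_mono) auto
    also have "\<dots> \<le> measure_pmf.expectation (P n) (\<lambda>a. \<bar>X n a\<bar>) / \<eta>"
      by (rule integral_Markov_inequality_measure) (auto simp: \<eta> integrable_measure_pmf_finite[OF fin])
    finally show ?thesis .
  qed
  have B_\<eta>: "(\<lambda>n. B n / \<eta>) \<longlonglongrightarrow> 0" using tendsto_divide[OF B tendsto_const, of \<eta>] \<eta> by simp
  show "(\<lambda>n. measure_pmf.prob (P n) {a. \<bar>X n a\<bar> > \<eta>}) \<longlonglongrightarrow> 0"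
  proof (rule tendsto_sandwich[OF _ _ tendsto_const B_\<eta>])
    show "\<forall>\<^sub>F n in sequentially. 0 \<le> measure_pmf.prob (P n) {a. \<bar>X n a\<bar> > \<eta>}" by simp
    show "\<forall>\<^sub>F n in sequentially. measure_pmf.prob (P n) {a. \<bar>X n a\<bar> > \<eta>} \<le> B n / \<eta>"
      using bound
    proof eventually_elim
      case (elim n)
      show ?case by (rule order_trans[OF markov divide_right_mono[OF elim]]) (use \<eta> in simp)
    qed
  qed
qed

lemma ratio_eps_tendsto_0:
  assumes "\<forall>\<^sub>F n in sequentially. bn n (\<beta> n) / cn n (\<beta> n) \<le> sqrt (real n)"
  shows "(\<lambda>n. ratio_eps n r (\<beta> n)) \<longlonglongrightarrow> 0"
proof (rule tendsto_sandwich[OF _ _ tendsto_const])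
  have large: "\<forall>\<^sub>F n in sequentially. 2 * r + 6 \<le> n" by (rule eventually_ge_at_top)
  show "\<forall>\<^sub>F n in sequentially. 0 \<le> ratio_eps n r (\<beta> n)"
    using large
  proof eventually_elim
    case (elim n)
    then have "4 \<le> cn n (\<beta> n)" "cn n (\<beta> n) \<le> bn n (\<beta> n)" by (auto intro: cn_ge_4 cn_le_bn)
    then show ?case using elim unfolding ratio_eps_def by (intro divide_nonneg_pos mult_pos_pos) auto
  qed
  show "\<forall>\<^sub>F n in sequentially. ratio_eps n r (\<beta> n) \<le> 2 * real r * (1 / sqrt (real n))"
    using assms large
  proof eventually_elim
    case (elim n)
    let ?b = "bn n (\<beta> n)" and ?c = "cn n (\<beta> n)"
    have c: "0 < ?c" using cn_ge_4[of n "\<beta> n"] elim by linarith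
    have d: "real n / 2 \<le> real n - real r - 2" using elim by linarith
    have "ratio_eps n r (\<beta> n) = real r * (?b / ?c) / (real n - real r - 2)"
      unfolding ratio_eps_def by (simp add: field_simps)
    also have "\<dots> \<le> real r * sqrt (real n) / (real n / 2)"
      using elim d c by (intro frac_le mult_left_mono) auto
    also have "\<dots> = 2 * real r * (1 / sqrt (real n))"
      using elim by (simp add: field_simps real_sqrt_mult[symmetric] flip: power2_eq_square)
    finally show ?case .
  qed
  have "(\<lambda>n. 1 / sqrt (real n)) \<longlonglongrightarrow> 0" by real_asymp
  then show "(\<lambda>n. 2 * real r * (1 / sqrt (real n))) \<longlonglongrightarrow> 0" by (rule tendsto_mult_right_zero)
qed

lemma eventually_le_sqrt_if_cube_small:
  fixes q h g :: "nat \<Rightarrow> real"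
  assumes "h \<in> o(g)" "g \<in> O(\<lambda>n. real n powr (3/2))" "\<forall>\<^sub>F n in sequentially. q n ^ 3 \<le> h n"
  shows "\<forall>\<^sub>F n in sequentially. q n \<le> sqrt (real n)"
proof -
  have "h \<in> o(\<lambda>n. real n powr (3/2))" using assms(1,2) by (rule landau_o.small_big_trans)
  from landau_o.smallD[OF this, of 1]
  have "\<forall>\<^sub>F n in sequentially. \<bar>h n\<bar> \<le> real n powr (3/2)" by simp
  then show ?thesis using assms(3) eventually_ge_at_top[of 1]
  proof eventually_elim
    case (elim n)
    have "sqrt (real n) ^ 3 = (real n powr (1/2)) ^ 3" by (simp add: powr_half_sqrt)
    also have "\<dots> = real n powr (3/2)" using elim by (subst powr_power) auto
    finally have "real n powr (3/2) = sqrt (real n) ^ 3" ..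
    then have "q n ^ Suc 2 \<le> sqrt (real n) ^ Suc 2" using elim by simp
    then show ?case by (rule power_le_imp_le_base) simp
  qed
qed

lemma op1_if_bounded_by_ratio_eps:
  fixes X :: "nat \<Rightarrow> (nat \<times> nat \<Rightarrow> bool) \<Rightarrow> real" and B :: "real \<Rightarrow> real"
  assumes ratio: "\<forall>\<^sub>F n in sequentially. bn n (\<beta> n) / cn n (\<beta> n) \<le> sqrt (real n)"
    and bound: "\<And>n. r + 3 \<le> n \<Longrightarrow> ratio_eps n r (\<beta> n) \<le> 1/2 \<Longrightarrow>
                  expect n (\<beta> n) (\<lambda>a. \<bar>X n a\<bar>) \<le> B (ratio_eps n r (\<beta> n))"
    and B: "isCont B 0" "B 0 = 0"
  shows "op1 (\<lambda>n. beta_pmf n (\<beta> n)) X"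
proof (rule op1_if_expectation_abs_le[OF finite_set_pmf_beta_pmf])
  have eps: "(\<lambda>n. ratio_eps n r (\<beta> n)) \<longlonglongrightarrow> 0" by (rule ratio_eps_tendsto_0[OF ratio])
  show "(\<lambda>n. B (ratio_eps n r (\<beta> n))) \<longlonglongrightarrow> 0"
    using isCont_tendsto_compose[OF B(1) eps] B(2) by simp
  have "\<forall>\<^sub>F n in sequentially. ratio_eps n r (\<beta> n) < 1/2" using order_tendstoD(2)[OF eps, of "1/2"] by simp
  moreover have "\<forall>\<^sub>F n in sequentially. r + 3 \<le> n" by (rule eventually_ge_at_top)
  ultimately show "\<forall>\<^sub>F n in sequentially. expect n (\<beta> n) (\<lambda>a. \<bar>X n a\<bar>) \<le> B (ratio_eps n r (\<beta> n))"
    by eventually_elim (simp add: bound)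
qed

lemma op1_w11_statistic:
  fixes \<beta> :: "nat \<Rightarrow> nat \<Rightarrow> real"
  assumes r_pos: "0 < r"
    and "(\<lambda>n. bn n (\<beta> n) ^ 3 / cn n (\<beta> n) ^ 2) \<in> o(\<lambda>n. real n powr (3/2) / sqrt (ln (real n)))"
  shows "op1 (\<lambda>n. beta_pmf n (\<beta> n))
           (\<lambda>n a. (\<Sum>i<r. dbar n (\<beta> n) i a) * wtil11 n r (\<beta> n) * (\<Sum>i<r. dbar n (\<beta> n) i a))"
proof (rule op1_if_bounded_by_ratio_eps[where B = "\<lambda>e. 2 * e"])
  have "(\<lambda>n. real n powr (3/2) / sqrt (ln (real n))) \<in> O(\<lambda>n. real n powr (3/2))" by real_asymp
  moreover have "\<forall>\<^sub>F n in sequentially. (bn n (\<beta> n) / cn n (\<beta> n))^3 \<le> bn n (\<beta> n) ^ 3 / cn n (\<beta> n) ^ 2"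
    using eventually_ge_at_top[of 2] by eventually_elim (rule ratio_cube_le)
  ultimately show "\<forall>\<^sub>F n in sequentially. bn n (\<beta> n) / cn n (\<beta> n) \<le> sqrt (real n)"
    by (rule eventually_le_sqrt_if_cube_small[OF assms(2)])
qed (auto intro: expectation_w11_stat[OF r_pos] intro!: continuous_intros)

lemma op1_w12_statistic:
  fixes \<beta> :: "nat \<Rightarrow> nat \<Rightarrow> real"
  assumes r_pos: "0 < r"
    and "(\<lambda>n. bn n (\<beta> n) ^ 3 / cn n (\<beta> n) ^ 3) \<in> o(\<lambda>n. sqrt (real n))"
  shows "op1 (\<lambda>n. beta_pmf n (\<beta> n))
           (\<lambda>n a. (\<Sum>i<r. dbar n (\<beta> n) i a) *
                  (\<Sum>j<n - r. wtil12 n r (\<beta> n) j * dbar n (\<beta> n) (r + j) a))"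
proof (rule op1_if_bounded_by_ratio_eps[where B = "\<lambda>e. 2 * sqrt e"])
  have "(\<lambda>n. sqrt (real n)) \<in> O(\<lambda>n. real n powr (3/2))" by real_asymp
  then show "\<forall>\<^sub>F n in sequentially. bn n (\<beta> n) / cn n (\<beta> n) \<le> sqrt (real n)"
    by (rule eventually_le_sqrt_if_cube_small[OF assms(2)]) (simp add: power_divide)
qed (auto intro: expectation_w12_stat[OF r_pos] intro!: continuous_intros)

lemma op1_W22_minus_Wtil22_statistic:
  fixes \<beta> :: "nat \<Rightarrow> nat \<Rightarrow> real"
  assumes r_pos: "0 < r" and equal: "\<And>n i. i < r \<Longrightarrow> \<beta> n i = \<beta> n 0"
  shows "op1 (\<lambda>n. beta_pmf n (\<beta> n))
           (\<lambda>n a. \<Sum>i<n - r. \<Sum>j<n - r. dbar n (\<beta> n) (r + i) a *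
                  (W22 n r (\<beta> n) $$ (i,j) - Wtil22 n r (\<beta> n) $$ (i,j)) * dbar n (\<beta> n) (r + j) a)"
proof (rule op1_if_expectation_abs_le[OF finite_set_pmf_beta_pmf _ tendsto_const])
  show "\<forall>\<^sub>F n in sequentially. expect n (\<beta> n) (\<lambda>a. \<bar>\<Sum>i<n - r. \<Sum>j<n - r. dbar n (\<beta> n) (r + i) a *
          (W22 n r (\<beta> n) $$ (i,j) - Wtil22 n r (\<beta> n) $$ (i,j)) * dbar n (\<beta> n) (r + j) a\<bar>) \<le> 0"
    using eventually_ge_at_top[of "r + 3"]
  proof eventually_elim
    case (elim n)
    then show ?case by (simp add: W22_eq_Wtil22[where \<beta> = "\<beta> n", OF r_pos elim equal])
  qed
qed

theorem lemma14:
  fixes \<beta> :: "nat \<Rightarrow> nat \<Rightarrow> real" and r :: nat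
  assumes r_pos: "r > 0"
    and equal: "\<And>n i. i < r \<Longrightarrow> \<beta> n i = \<beta> n 0"
  shows
   "((\<lambda>n. bn n (\<beta> n) ^ 3 / cn n (\<beta> n) ^ 2) \<in> o(\<lambda>n. real n powr (3/2) / sqrt (ln (real n))) \<longrightarrow>
       op1 (\<lambda>n. beta_pmf n (\<beta> n))
           (\<lambda>n a. (\<Sum>i<r. dbar n (\<beta> n) i a) * wtil11 n r (\<beta> n) * (\<Sum>i<r. dbar n (\<beta> n) i a)))
  \<and> ((\<lambda>n. bn n (\<beta> n) ^ 3 / cn n (\<beta> n) ^ 3) \<in> o(\<lambda>n. sqrt (real n)) \<longrightarrow>
       op1 (\<lambda>n. beta_pmf n (\<beta> n))
           (\<lambda>n a. (\<Sum>i<r. dbar n (\<beta> n) i a) *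
                  (\<Sum>j<n - r. wtil12 n r (\<beta> n) j * dbar n (\<beta> n) (r + j) a)))
  \<and> ((\<lambda>n. bn n (\<beta> n) ^ 3 / cn n (\<beta> n) ^ 3) \<in> o(\<lambda>n. real n powr (3/4)) \<longrightarrow>
       op1 (\<lambda>n. beta_pmf n (\<beta> n))
           (\<lambda>n a. \<Sum>i<n - r. \<Sum>j<n - r. dbar n (\<beta> n) (r + i) a *
                  (W22 n r (\<beta> n) $$ (i,j) - Wtil22 n r (\<beta> n) $$ (i,j)) * dbar n (\<beta> n) (r + j) a))"
  using op1_w11_statistic[OF r_pos] op1_w12_statistic[OF r_pos]
    op1_W22_minus_Wtil22_statistic[where \<beta> = \<beta>, OF r_pos equal]
  by blast

end
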